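(* Let $F=(F,\xi):\mathcal A\to\mathcal B$ be a triangle functor between triangulated categories. The following are equivalent: (i) $F$ satisfies condition (WSM): for each morphism $u:X\to Y$ in $\mathcal A$ such that $F(u)$ is a splitting monomorphism in $\mathcal B$, there exists an object $X'$ and a morphism $u':Y\to X'$ in $\mathcal A$ such that $F(u'u)$ is an isomorphism in $\mathcal B$; (ii) $F$ is objective; (iii) the induced triangle functor $\widetilde F:\mathcal A/\operatorname{Ker}(F)\to\mathcal B$ is faithful.
   Context: All functors are covariant and additive. A triangle functor is a pair $(F,\xi)$ with $F$ additive and $\xi:F\circ[1]\to[1]\circ F$ a natural isomorphism such that $F$ sends each distinguished triangle $X\xrightarrow{u}Y\xrightarrow{v}Z\xrightarrow{w}X[1]$ to the distinguished triangle $F(X)\xrightarrow{F(u)}F(Y)\xrightarrow{F(v)}F(Z)\xrightarrow{\xi_XF(w)}F(X)[1]$. A functor $F$ between additive categories is objective if every morphism $f$ with $F(f)=0$ factors through an object $K$ with $F(K)=0$. $\operatorname{Ker}(F)$ denotes the full subcategory of $\mathcal A$ of objects $X$ with $F(X)=0$; it is a triangulated subcategory. For a triangulated subcategory $\mathcal K$ of $\mathcal A$, the Verdier quotient $V_{\mathcal K}:\mathcal A\to\mathcal A/\mathcal K$ is the dense triangle functor with $V_{\mathcal K}(\mathcal K)=0$ and the universal property that every triangle functor $G:\mathcal A\to\mathcal B$ with $G(\mathcal K)=0$ factors uniquely as $G=G'V_{\mathcal K}$ with $G'$ a triangle functor. Writing $V_F=V_{\operatorname{Ker}(F)}$, $\widetilde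 F$ is the unique triangle functor $\mathcal A/\operatorname{Ker}(F)\to\mathcal B$ with $F=\widetilde F V_F$. *)

theory Defs
  imports Main
begin

record ('o,'m) addcat =
  Ob  :: "'o set"
  Ar  :: "'m set"
  Dom :: "'m \<Rightarrow> 'o"
  Cod :: "'m \<Rightarrow> 'o"
  Cmp :: "'m \<Rightarrow> 'm \<Rightarrow> 'm"   (* Cmp C g f = g o f *)
  Idm :: "'o \<Rightarrow> 'm"
  Add :: "'m \<Rightarrow> 'm \<Rightarrow> 'm"
  Zer :: "'o \<Rightarrow> 'o \<Rightarrow> 'm"
  Neg :: "'m \<Rightarrow> 'm"

record ('o,'m) tricat = "('o,'m) addcat" +
  Sh   :: "'o \<Rightarrow> 'o"
  ShM  :: "'m \<Rightarrow> 'm"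
  Dist :: "('m \<times> 'm \<times> 'm) set"

definition hom :: "('o,'m,'x) addcat_scheme \<Rightarrow> 'o \<Rightarrow> 'o \<Rightarrow> 'm set" where
  "hom C X Y = {f \<in> Ar C. Dom C f = X \<and> Cod C f = Y}"

definition is_category :: "('o,'m,'x) addcat_scheme \<Rightarrow> bool" where
  "is_category C \<longleftrightarrow>
     (\<forall>f\<in>Ar C. Dom C f \<in> Ob C \<and> Cod C f \<in> Ob C) \<and>
     (\<forall>X\<in>Ob C. Idm C X \<in> hom C X X) \<and>
     (\<forall>X\<in>Ob C. \<forall>Y\<in>Ob C. \<forall>Z\<in>Ob C. \<forall>f\<in>hom C X Y. \<forall>g\<in>hom C Y Z. Cmp C g f \<in> hom C X Z) \<and>
     (\<forall>W\<in>Ob C. \<forall>X\<in>Ob C. \<forall>Y\<in>Ob C. \<forall>Z\<in>Ob C. \<forall>f\<in>hom C W X. \<forall>g\<in>hom C X Y. \<forall>h\<in>hom C Y Z.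
        Cmp C h (Cmp C g f) = Cmp C (Cmp C h g) f) \<and>
     (\<forall>f\<in>Ar C. Cmp C f (Idm C (Dom C f)) = f \<and> Cmp C (Idm C (Cod C f)) f = f)"

definition is_preadditive :: "('o,'m,'x) addcat_scheme \<Rightarrow> bool" where
  "is_preadditive C \<longleftrightarrow>
     (\<forall>X\<in>Ob C. \<forall>Y\<in>Ob C.
        Zer C X Y \<in> hom C X Y \<and>
        (\<forall>f\<in>hom C X Y. \<forall>g\<in>hom C X Y. Add C f g \<in> hom C X Y) \<and>
        (\<forall>f\<in>hom C X Y. Neg C f \<in> hom C X Y) \<and>
        (\<forall>f\<in>hom C X Y. \<forall>g\<in>hom C X Y. \<forall>h\<in>hom C X Y. Add C (Add C f g) h = Add C f (Add C g h)) \<and>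
        (\<forall>f\<in>hom C X Y. \<forall>g\<in>hom C X Y. Add C f g = Add C g f) \<and>
        (\<forall>f\<in>hom C X Y. Add C f (Zer C X Y) = f) \<and>
        (\<forall>f\<in>hom C X Y. Add C f (Neg C f) = Zer C X Y)) \<and>
     (\<forall>X\<in>Ob C. \<forall>Y\<in>Ob C. \<forall>Z\<in>Ob C.
        (\<forall>f\<in>hom C X Y. \<forall>g\<in>hom C Y Z. \<forall>g'\<in>hom C Y Z.
            Cmp C (Add C g g') f = Add C (Cmp C g f) (Cmp C g' f)) \<and>
        (\<forall>f\<in>hom C X Y. \<forall>f'\<in>hom C X Y. \<forall>g\<in>hom C Y Z.
            Cmp C g (Add C f f') = Add C (Cmp C g f) (Cmp C g f')))"

definition is_zero_obj :: "('o,'m,'x) addcat_scheme \<Rightarrow> 'o \<Rightarrow> bool" where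
  "is_zero_obj C Z \<longleftrightarrow> Z \<in> Ob C \<and>
     (\<forall>X\<in>Ob C. (\<exists>!f. f \<in> hom C Z X) \<and> (\<exists>!f. f \<in> hom C X Z))"

definition has_biproducts :: "('o,'m,'x) addcat_scheme \<Rightarrow> bool" where
  "has_biproducts C \<longleftrightarrow> (\<forall>X\<in>Ob C. \<forall>Y\<in>Ob C. \<exists>P\<in>Ob C.
     \<exists>p1\<in>hom C P X. \<exists>p2\<in>hom C P Y. \<exists>i1\<in>hom C X P. \<exists>i2\<in>hom C Y P.
       Cmp C p1 i1 = Idm C X \<and> Cmp C p2 i2 = Idm C Y \<and>
       Cmp C p1 i2 = Zer C Y X \<and> Cmp C p2 i1 = Zer C X Y \<and>
       Add C (Cmp C i1 p1) (Cmp C i2 p2) = Idm C P)"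

definition is_additive :: "('o,'m,'x) addcat_scheme \<Rightarrow> bool" where
  "is_additive C \<longleftrightarrow> is_category C \<and> is_preadditive C \<and>
     (\<exists>Z. is_zero_obj C Z) \<and> has_biproducts C"

definition is_iso :: "('o,'m,'x) addcat_scheme \<Rightarrow> 'm \<Rightarrow> bool" where
  "is_iso C f \<longleftrightarrow> f \<in> Ar C \<and> (\<exists>g\<in>hom C (Cod C f) (Dom C f).
      Cmp C g f = Idm C (Dom C f) \<and> Cmp C f g = Idm C (Cod C f))"

definition inv_arr :: "('o,'m,'x) addcat_scheme \<Rightarrow> 'm \<Rightarrow> 'm" where
  "inv_arr C f = (SOME g. g \<in> hom C (Cod C f) (Dom C f) \<and>
      Cmp C g f = Idm C (Dom C f) \<and> Cmp C f g = Idm C (Cod C f))"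

definition is_split_mono :: "('o,'m,'x) addcat_scheme \<Rightarrow> 'm \<Rightarrow> bool" where
  "is_split_mono C f \<longleftrightarrow> f \<in> Ar C \<and>
     (\<exists>r\<in>hom C (Cod C f) (Dom C f). Cmp C r f = Idm C (Dom C f))"

definition is_functor :: "('o,'m,'x) addcat_scheme \<Rightarrow> ('p,'n,'y) addcat_scheme
     \<Rightarrow> ('o \<Rightarrow> 'p) \<Rightarrow> ('m \<Rightarrow> 'n) \<Rightarrow> bool" where
  "is_functor C D Fo Fm \<longleftrightarrow>
     (\<forall>X\<in>Ob C. Fo X \<in> Ob D) \<and>
     (\<forall>X\<in>Ob C. \<forall>Y\<in>Ob C. \<forall>f\<in>hom C X Y. Fm f \<in> hom D (Fo X) (Fo Y)) \<and>
     (\<forall>X\<in>Ob C. Fm (Idm C X) = Idm D (Fo X)) \<and>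
     (\<forall>X\<in>Ob C. \<forall>Y\<in>Ob C. \<forall>Z\<in>Ob C. \<forall>f\<in>hom C X Y. \<forall>g\<in>hom C Y Z.
        Fm (Cmp C g f) = Cmp D (Fm g) (Fm f))"

definition is_additive_functor :: "('o,'m,'x) addcat_scheme \<Rightarrow> ('p,'n,'y) addcat_scheme
     \<Rightarrow> ('o \<Rightarrow> 'p) \<Rightarrow> ('m \<Rightarrow> 'n) \<Rightarrow> bool" where
  "is_additive_functor C D Fo Fm \<longleftrightarrow> is_functor C D Fo Fm \<and>
     (\<forall>X\<in>Ob C. \<forall>Y\<in>Ob C. \<forall>f\<in>hom C X Y. \<forall>g\<in>hom C X Y. Fm (Add C f g) = Add D (Fm f) (Fm g))"

definition is_triangle :: "('o,'m,'x) tricat_scheme \<Rightarrow> ('m \<times> 'm \<times> 'm) \<Rightarrow> bool" where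
  "is_triangle C t \<longleftrightarrow> (case t of (u, v, w) \<Rightarrow>
     u \<in> Ar C \<and> v \<in> hom C (Cod C u) (Cod C v) \<and> Dom C v = Cod C u \<and>
     w \<in> hom C (Cod C v) (Sh C (Dom C u)))"

definition is_tri_morph :: "('o,'m,'x) tricat_scheme \<Rightarrow> ('m \<times> 'm \<times> 'm) \<Rightarrow> ('m \<times> 'm \<times> 'm)
     \<Rightarrow> ('m \<times> 'm \<times> 'm) \<Rightarrow> bool" where
  "is_tri_morph C t t' m \<longleftrightarrow> (case t of (u, v, w) \<Rightarrow> case t' of (u', v', w') \<Rightarrow> case m of (a, b, c) \<Rightarrow>
     is_triangle C t \<and> is_triangle C t' \<and>
     a \<in> hom C (Dom C u) (Dom C u') \<and> b \<in> hom C (Cod C u) (Cod C u') \<and>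
     c \<in> hom C (Cod C v) (Cod C v') \<and>
     Cmp C b u = Cmp C u' a \<and> Cmp C c v = Cmp C v' b \<and>
     Cmp C (ShM C a) w = Cmp C w' c)"

definition is_triangulated :: "('o,'m,'x) tricat_scheme \<Rightarrow> bool" where
  "is_triangulated C \<longleftrightarrow>
     is_additive C \<and>
     \<comment> \<open>the shift is an additive auto-equivalence\<close>
     is_additive_functor C C (Sh C) (ShM C) \<and>
     (\<forall>X\<in>Ob C. \<forall>Y\<in>Ob C. bij_betw (ShM C) (hom C X Y) (hom C (Sh C X) (Sh C Y))) \<and>
     (\<forall>Y\<in>Ob C. \<exists>X\<in>Ob C. \<exists>f\<in>hom C (Sh C X) Y. is_iso C f) \<and>
     \<comment> \<open>TR1\<close>
     (\<forall>t\<in>Dist C. is_triangle C t) \<and>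
     (\<forall>t t' a b c. t \<in> Dist C \<and> is_tri_morph C t t' (a, b, c) \<and>
          is_iso C a \<and> is_iso C b \<and> is_iso C c \<longrightarrow> t' \<in> Dist C) \<and>
     (\<forall>X\<in>Ob C. \<forall>Z0. is_zero_obj C Z0 \<longrightarrow>
          (Idm C X, Zer C X Z0, Zer C Z0 (Sh C X)) \<in> Dist C) \<and>
     (\<forall>u\<in>Ar C. \<exists>v w. (u, v, w) \<in> Dist C) \<and>
     \<comment> \<open>TR2\<close>
     (\<forall>u v w. (u, v, w) \<in> Dist C \<longleftrightarrow>
          (is_triangle C (u, v, w) \<and> (v, w, Neg C (ShM C u)) \<in> Dist C)) \<and>
     \<comment> \<open>TR3\<close>
     (\<forall>u v w u' v' w' a b. (u, v, w) \<in> Dist C \<and> (u', v', w') \<in> Dist C \<and>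
          a \<in> hom C (Dom C u) (Dom C u') \<and> b \<in> hom C (Cod C u) (Cod C u') \<and>
          Cmp C b u = Cmp C u' a \<longrightarrow>
          (\<exists>c. is_tri_morph C (u, v, w) (u', v', w') (a, b, c))) \<and>
     \<comment> \<open>TR4 (octahedral axiom)\<close>
     (\<forall>u v j k l i m n. u \<in> Ar C \<and> v \<in> Ar C \<and> Dom C v = Cod C u \<and>
          (u, j, k) \<in> Dist C \<and> (v, l, i) \<in> Dist C \<and> (Cmp C v u, m, n) \<in> Dist C \<longrightarrow>
          (\<exists>f g. (f, g, Cmp C (ShM C j) i) \<in> Dist C \<and>
             Cmp C f j = Cmp C m v \<and> Cmp C n f = k \<and>
             Cmp C g m = l \<and> Cmp C i g = Cmp C (ShM C u) n))"

definition is_triangle_functor :: "('o,'m,'x) tricat_scheme \<Rightarrow> ('p,'n,'y) tricat_scheme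
     \<Rightarrow> ('o \<Rightarrow> 'p) \<Rightarrow> ('m \<Rightarrow> 'n) \<Rightarrow> ('o \<Rightarrow> 'n) \<Rightarrow> bool" where
  "is_triangle_functor A B Fo Fm \<xi> \<longleftrightarrow>
     is_additive_functor A B Fo Fm \<and>
     (\<forall>X\<in>Ob A. \<xi> X \<in> hom B (Fo (Sh A X)) (Sh B (Fo X)) \<and> is_iso B (\<xi> X)) \<and>
     (\<forall>X\<in>Ob A. \<forall>Y\<in>Ob A. \<forall>f\<in>hom A X Y.
        Cmp B (\<xi> Y) (Fm (ShM A f)) = Cmp B (ShM B (Fm f)) (\<xi> X)) \<and>
     (\<forall>u v w. (u, v, w) \<in> Dist A \<longrightarrow>
        (Fm u, Fm v, Cmp B (\<xi> (Dom A u)) (Fm w)) \<in> Dist B)"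

definition in_Ker :: "('p,'n,'y) addcat_scheme \<Rightarrow> ('o \<Rightarrow> 'p) \<Rightarrow> 'o \<Rightarrow> bool" where
  "in_Ker B Fo X \<longleftrightarrow> is_zero_obj B (Fo X)"

definition objective :: "('o,'m,'x) addcat_scheme \<Rightarrow> ('p,'n,'y) addcat_scheme
     \<Rightarrow> ('o \<Rightarrow> 'p) \<Rightarrow> ('m \<Rightarrow> 'n) \<Rightarrow> bool" where
  "objective A B Fo Fm \<longleftrightarrow>
     (\<forall>f\<in>Ar A. Fm f = Zer B (Fo (Dom A f)) (Fo (Cod A f)) \<longrightarrow>
        (\<exists>K\<in>Ob A. \<exists>g\<in>hom A (Dom A f) K. \<exists>h\<in>hom A K (Cod A f).
            f = Cmp A h g \<and> is_zero_obj B (Fo K)))"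

definition WSM :: "('o,'m,'x) addcat_scheme \<Rightarrow> ('p,'n,'y) addcat_scheme
     \<Rightarrow> ('o \<Rightarrow> 'p) \<Rightarrow> ('m \<Rightarrow> 'n) \<Rightarrow> bool" where
  "WSM A B Fo Fm \<longleftrightarrow>
     (\<forall>u\<in>Ar A. is_split_mono B (Fm u) \<longrightarrow>
        (\<exists>X'\<in>Ob A. \<exists>u'\<in>hom A (Cod A u) X'. is_iso B (Fm (Cmp A u' u))))"

section \<open>The Verdier quotient A/Ker(F) (calculus of fractions) and the induced functor\<close>

definition quasi_iso :: "('o,'m,'x) tricat_scheme \<Rightarrow> ('o \<Rightarrow> bool) \<Rightarrow> 'm \<Rightarrow> bool" where
  "quasi_iso A K s \<longleftrightarrow> s \<in> Ar A \<and> (\<exists>v w. (s, v, w) \<in> Dist A \<and> K (Cod A v))"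

text \<open>A roof X <-s- Z -f-> Y (representing f s^-1 in A/K).\<close>
definition is_roof :: "('o,'m,'x) tricat_scheme \<Rightarrow> ('o \<Rightarrow> bool) \<Rightarrow> 'o \<Rightarrow> 'o \<Rightarrow> 'm \<times> 'm \<Rightarrow> bool" where
  "is_roof A K X Y r \<longleftrightarrow> (case r of (s, f) \<Rightarrow>
     quasi_iso A K s \<and> Cod A s = X \<and> f \<in> hom A (Dom A s) Y)"

definition roof_equiv :: "('o,'m,'x) tricat_scheme \<Rightarrow> ('o \<Rightarrow> bool) \<Rightarrow> 'm \<times> 'm \<Rightarrow> 'm \<times> 'm \<Rightarrow> bool" where
  "roof_equiv A K r r' \<longleftrightarrow> (case r of (s, f) \<Rightarrow> case r' of (s', f') \<Rightarrow>
     (\<exists>W\<in>Ob A. \<exists>t\<in>hom A W (Dom A s). \<exists>t'\<in>hom A W (Dom A s').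
        Cmp A s t = Cmp A s' t' \<and> quasi_iso A K (Cmp A s t) \<and> Cmp A f t = Cmp A f' t'))"

definition induced_on_roof :: "('p,'n,'y) addcat_scheme \<Rightarrow> ('m \<Rightarrow> 'n) \<Rightarrow> 'm \<times> 'm \<Rightarrow> 'n" where
  "induced_on_roof B Fm r = (case r of (s, f) \<Rightarrow> Cmp B (Fm f) (inv_arr B (Fm s)))"

definition induced_faithful :: "('o,'m,'x) tricat_scheme \<Rightarrow> ('p,'n,'y) tricat_scheme
     \<Rightarrow> ('o \<Rightarrow> 'p) \<Rightarrow> ('m \<Rightarrow> 'n) \<Rightarrow> bool" where
  "induced_faithful A B Fo Fm \<longleftrightarrow>
     (\<forall>X\<in>Ob A. \<forall>Y\<in>Ob A. \<forall>r r'.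
        is_roof A (in_Ker B Fo) X Y r \<and> is_roof A (in_Ker B Fo) X Y r' \<and>
        induced_on_roof B Fm r = induced_on_roof B Fm r' \<longrightarrow>
        roof_equiv A (in_Ker B Fo) r r')"

end

theory Submission
  imports Defs
begin

text \<open>
  (i) implies (ii): if F kills f, complete f to a triangle (f, g, h). Then F(g) is a split
  monomorphism, so by (WSM) F(g' g) is an isomorphism for some g'; the object K completing
  g' g to a triangle (k, g' g, c) therefore lies in Ker F, and since g' g f = 0 the map f
  factors through k.

  (ii) implies (i): if F(u) is a split monomorphism, F kills the third map w of a triangle
  (u, v, w), so w factors through some K in Ker F. The map from the shift of X to the cone
  of K -> shift of X is inverted by F and kills w; desuspending it gives a: X -> D with
  F(a) invertible and the shift of a killing w, hence a factors through u.

  (ii) iff (iii): morphisms of the Verdier quotient are roofs f s^-1 with F(s) invertible.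
  Faithfulness on the roofs (1, f) and (1, 0) says that F(f) = 0 forces f t = 0 for some t
  with cone in Ker F, i.e. f factors through that cone. Conversely, two roofs with the same
  image can be brought to a common denominator by the Ore condition, and objectivity applied
  to the difference of the numerators, which F kills, yields the equalizing quasi-isomorphism.
\<close>

section \<open>Additive categories\<close>

locale additive_category =
  fixes C :: "('o,'m,'x) addcat_scheme"
  assumes additive: "is_additive C"
begin

lemma category: "is_category C" and preadditive: "is_preadditive C"
  using additive unfolding is_additive_def by auto

lemma hom_dom: "f \<in> hom C X Y \<Longrightarrow> Dom C f = X"
  and hom_cod: "f \<in> hom C X Y \<Longrightarrow> Cod C f = Y"
  and hom_ar: "f \<in> hom C X Y \<Longrightarrow> f \<in> Ar C"
  by (simp_all add: hom_def)

lemma arr_hom: "f \<in> Ar C \<Longrightarrow> f \<in> hom C (Dom C f) (Cod C f)"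
  by (simp add: hom_def)

lemma hom_ob: "f \<in> hom C X Y \<Longrightarrow> X \<in> Ob C" "f \<in> hom C X Y \<Longrightarrow> Y \<in> Ob C"
  using category unfolding is_category_def hom_def by auto

lemma id_hom: "X \<in> Ob C \<Longrightarrow> Idm C X \<in> hom C X X"
  using category unfolding is_category_def by auto

lemma comp_hom: "f \<in> hom C X Y \<Longrightarrow> g \<in> hom C Y Z \<Longrightarrow> Cmp C g f \<in> hom C X Z"
  using category hom_ob unfolding is_category_def by blast

lemma comp_assoc: "f \<in> hom C W X \<Longrightarrow> g \<in> hom C X Y \<Longrightarrow> h \<in> hom C Y Z \<Longrightarrow>
   Cmp C h (Cmp C g f) = Cmp C (Cmp C h g) f"
  using category hom_ob unfolding is_category_def by blast

lemma comp_id_right: "f \<in> hom C X Y \<Longrightarrow> Cmp C f (Idm C X) = f"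
  using category unfolding is_category_def hom_def by auto

lemma comp_id_left: "f \<in> hom C X Y \<Longrightarrow> Cmp C (Idm C Y) f = f"
  using category unfolding is_category_def hom_def by auto

lemma zero_hom: "X \<in> Ob C \<Longrightarrow> Y \<in> Ob C \<Longrightarrow> Zer C X Y \<in> hom C X Y"
  using preadditive unfolding is_preadditive_def by auto

lemma add_hom: "f \<in> hom C X Y \<Longrightarrow> g \<in> hom C X Y \<Longrightarrow> Add C f g \<in> hom C X Y"
  using preadditive hom_ob unfolding is_preadditive_def by blast

lemma neg_hom: "f \<in> hom C X Y \<Longrightarrow> Neg C f \<in> hom C X Y"
  using preadditive hom_ob unfolding is_preadditive_def by blast

lemma add_assoc: "f \<in> hom C X Y \<Longrightarrow> g \<in> hom C X Y \<Longrightarrow> h \<in> hom C X Y \<Longrightarrow>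
   Add C (Add C f g) h = Add C f (Add C g h)"
  using preadditive hom_ob unfolding is_preadditive_def by blast

lemma add_comm: "f \<in> hom C X Y \<Longrightarrow> g \<in> hom C X Y \<Longrightarrow> Add C f g = Add C g f"
  using preadditive hom_ob unfolding is_preadditive_def by blast

lemma add_zero_right: "f \<in> hom C X Y \<Longrightarrow> Add C f (Zer C X Y) = f"
  using preadditive hom_ob unfolding is_preadditive_def by blast

lemma add_neg_right: "f \<in> hom C X Y \<Longrightarrow> Add C f (Neg C f) = Zer C X Y"
  using preadditive hom_ob unfolding is_preadditive_def by blast

lemma comp_add_left:
  assumes "f \<in> hom C X Y" "g \<in> hom C Y Z" "g' \<in> hom C Y Z"
  shows "Cmp C (Add C g g') f = Add C (Cmp C g f) (Cmp C g' f)"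
proof -
  have o: "X \<in> Ob C" "Y \<in> Ob C" "Z \<in> Ob C" using assms hom_ob by blast+
  have "\<forall>X\<in>Ob C. \<forall>Y\<in>Ob C. \<forall>Z\<in>Ob C. (\<forall>f\<in>hom C X Y. \<forall>g\<in>hom C Y Z. \<forall>g'\<in>hom C Y Z.
            Cmp C (Add C g g') f = Add C (Cmp C g f) (Cmp C g' f))"
    using preadditive unfolding is_preadditive_def by blast
  then show ?thesis using o assms by blast
qed

lemma comp_add_right:
  assumes "f \<in> hom C X Y" "f' \<in> hom C X Y" "g \<in> hom C Y Z"
  shows "Cmp C g (Add C f f') = Add C (Cmp C g f) (Cmp C g f')"
proof -
  have o: "X \<in> Ob C" "Y \<in> Ob C" "Z \<in> Ob C" using assms hom_ob by blast+
  have "\<forall>X\<in>Ob C. \<forall>Y\<in>Ob C. \<forall>Z\<in>Ob C. (\<forall>f\<in>hom C X Y. \<forall>f'\<in>hom C X Y. \<forall>g\<in>hom C Y Z.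
            Cmp C g (Add C f f') = Add C (Cmp C g f) (Cmp C g f'))"
    using preadditive unfolding is_preadditive_def by auto
  then show ?thesis using o assms by blast
qed

lemma add_zero_left: "f \<in> hom C X Y \<Longrightarrow> Add C (Zer C X Y) f = f"
  by (metis add_comm add_zero_right hom_ob zero_hom)

lemma neg_unique:
  assumes a: "a \<in> hom C X Y" and b: "b \<in> hom C X Y" and s: "Add C a b = Zer C X Y"
  shows "b = Neg C a"
proof -
  have "b = Add C b (Add C a (Neg C a))" using a b add_neg_right add_zero_right by metis
  also have "\<dots> = Add C (Add C a b) (Neg C a)"
    using a b neg_hom add_assoc add_comm by metis
  also have "\<dots> = Neg C a" using s a neg_hom add_zero_left by metis
  finally show ?thesis .
qed

lemma add_idem_zero:
  assumes a: "a \<in> hom C X Y" and s: "Add C a a = a"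
  shows "a = Zer C X Y"
proof -
  have "a = Add C a (Add C a (Neg C a))" using a add_neg_right add_zero_right by metis
  also have "\<dots> = Add C (Add C a a) (Neg C a)" using a neg_hom add_assoc by metis
  also have "\<dots> = Zer C X Y" using s a add_neg_right by metis
  finally show ?thesis .
qed

lemma neg_neg: "a \<in> hom C X Y \<Longrightarrow> Neg C (Neg C a) = a"
  by (metis add_comm add_neg_right neg_hom neg_unique)

lemma neg_zero: "X \<in> Ob C \<Longrightarrow> Y \<in> Ob C \<Longrightarrow> Neg C (Zer C X Y) = Zer C X Y"
  by (metis add_zero_right neg_unique zero_hom)

lemma neg_inj: "a \<in> hom C X Y \<Longrightarrow> b \<in> hom C X Y \<Longrightarrow> Neg C a = Neg C b \<Longrightarrow> a = b"
  by (metis neg_neg)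

lemma neg_eq_zeroD: "a \<in> hom C X Y \<Longrightarrow> Neg C a = Zer C X Y \<Longrightarrow> a = Zer C X Y"
  by (metis hom_ob neg_neg neg_zero)

lemma eq_if_diff_zero:
  assumes "a \<in> hom C X Y" "b \<in> hom C X Y" "Add C a (Neg C b) = Zer C X Y"
  shows "a = b"
  by (metis assms neg_hom neg_neg neg_unique)

lemma comp_zero_right:
  assumes g: "g \<in> hom C Y Z" and X: "X \<in> Ob C"
  shows "Cmp C g (Zer C X Y) = Zer C X Z"
proof -
  have z: "Zer C X Y \<in> hom C X Y" using X g hom_ob zero_hom by blast
  have "Add C (Cmp C g (Zer C X Y)) (Cmp C g (Zer C X Y)) = Cmp C g (Zer C X Y)"
    using comp_add_right[OF z z g] add_zero_right[OF z] by simp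
  then show ?thesis using add_idem_zero comp_hom[OF z g] by blast
qed

lemma comp_zero_left:
  assumes g: "g \<in> hom C X Y" and Z: "Z \<in> Ob C"
  shows "Cmp C (Zer C Y Z) g = Zer C X Z"
proof -
  have z: "Zer C Y Z \<in> hom C Y Z" using Z g hom_ob zero_hom by blast
  have "Add C (Cmp C (Zer C Y Z) g) (Cmp C (Zer C Y Z) g) = Cmp C (Zer C Y Z) g"
    using comp_add_left[OF g z z] add_zero_right[OF z] by simp
  then show ?thesis using add_idem_zero comp_hom[OF g z] by blast
qed

lemma comp_neg_right:
  assumes f: "f \<in> hom C X Y" and g: "g \<in> hom C Y Z"
  shows "Cmp C g (Neg C f) = Neg C (Cmp C g f)"
proof -
  have "Add C (Cmp C g f) (Cmp C g (Neg C f)) = Zer C X Z"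
    using comp_add_right[OF f neg_hom[OF f] g] add_neg_right[OF f] comp_zero_right[OF g]
      hom_ob[OF f]
      by simp
  then show ?thesis using neg_unique comp_hom f g neg_hom by metis
qed

lemma comp_neg_left:
  assumes f: "f \<in> hom C X Y" and g: "g \<in> hom C Y Z"
  shows "Cmp C (Neg C g) f = Neg C (Cmp C g f)"
proof -
  have "Add C (Cmp C g f) (Cmp C (Neg C g) f) = Zer C X Z"
    using comp_add_left[OF f g neg_hom[OF g]] add_neg_right[OF g] comp_zero_left[OF f] hom_ob[OF g]
      by simp
  then show ?thesis using neg_unique comp_hom f g neg_hom by metis
qed

lemma zero_obj_ob: "is_zero_obj C Z \<Longrightarrow> Z \<in> Ob C"
  unfolding is_zero_obj_def by auto

lemma hom_to_zero_obj:
  assumes z: "is_zero_obj C Z" and f: "f \<in> hom C X Z"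
  shows "f = Zer C X Z"
proof -
  have X: "X \<in> Ob C" using hom_ob f by blast
  then have "\<exists>!f. f \<in> hom C X Z" using z unfolding is_zero_obj_def by blast
  then show ?thesis using f zero_hom[OF X zero_obj_ob[OF z]] by blast
qed

lemma hom_from_zero_obj:
  assumes z: "is_zero_obj C Z" and f: "f \<in> hom C Z X"
  shows "f = Zer C Z X"
proof -
  have X: "X \<in> Ob C" using hom_ob f by blast
  then have "\<exists>!f. f \<in> hom C Z X" using z unfolding is_zero_obj_def by blast
  then show ?thesis using f zero_hom[OF zero_obj_ob[OF z] X] by blast
qed

lemma comp_through_zero_obj: "is_zero_obj C Z \<Longrightarrow> f \<in> hom C X Z \<Longrightarrow> g \<in> hom C Z Y \<Longrightarrow>
   Cmp C g f = Zer C X Y"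
  by (metis comp_zero_right hom_ob(1) hom_to_zero_obj)

lemma ex_zero_obj: "\<exists>Z. is_zero_obj C Z"
  using additive unfolding is_additive_def by auto

lemma zero_objI:
  assumes X: "X \<in> Ob C" and e: "Idm C X = Zer C X X"
  shows "is_zero_obj C X"
  unfolding is_zero_obj_def
proof (intro conjI ballI X)
  fix Y assume Y: "Y \<in> Ob C"
  show "\<exists>!f. f \<in> hom C X Y"
  proof (rule ex1I[of _ "Zer C X Y"])
    show "Zer C X Y \<in> hom C X Y" using X Y zero_hom by blast
    fix f assume f: "f \<in> hom C X Y"
    have "f = Cmp C f (Idm C X)" using comp_id_right f by metis
    then show "f = Zer C X Y" using e comp_zero_right f X by metis
  qed
  show "\<exists>!f. f \<in> hom C Y X"
  proof (rule ex1I[of _ "Zer C Y X"])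
    show "Zer C Y X \<in> hom C Y X" using X Y zero_hom by blast
    fix f assume f: "f \<in> hom C Y X"
    have "f = Cmp C (Idm C X) f" using comp_id_left f by metis
    then show "f = Zer C Y X" using e comp_zero_left f X by metis
  qed
qed

lemma zero_obj_id: "is_zero_obj C Z \<Longrightarrow> Idm C Z = Zer C Z Z"
  by (meson id_hom hom_to_zero_obj zero_obj_ob)

lemma iso_inv_arr:
  assumes "is_iso C f" "f \<in> hom C X Y"
  shows "inv_arr C f \<in> hom C Y X \<and> Cmp C (inv_arr C f) f = Idm C X \<and>
    Cmp C f (inv_arr C f) = Idm C Y"
proof -
  have "\<exists>g. g \<in> hom C (Cod C f) (Dom C f) \<and>
      Cmp C g f = Idm C (Dom C f) \<and> Cmp C f g = Idm C (Cod C f)"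
    using assms(1) unfolding is_iso_def by blast
  from someI_ex[OF this] show ?thesis using assms(2) unfolding inv_arr_def hom_def by auto
qed

lemma isoI: "f \<in> hom C X Y \<Longrightarrow> g \<in> hom C Y X \<Longrightarrow> Cmp C g f = Idm C X \<Longrightarrow> Cmp C f g = Idm C Y
   \<Longrightarrow> is_iso C f"
  unfolding is_iso_def hom_def by auto

lemma iso_inv_arr_iso: "is_iso C f \<Longrightarrow> f \<in> hom C X Y \<Longrightarrow> is_iso C (inv_arr C f)"
  by (meson iso_inv_arr isoI)

lemma id_iso: "X \<in> Ob C \<Longrightarrow> is_iso C (Idm C X)"
  by (meson id_hom comp_id_left isoI)

lemma iso_comp:
  assumes f: "f \<in> hom C X Y" and g: "g \<in> hom C Y Z" and "is_iso C f" "is_iso C g"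
  shows "is_iso C (Cmp C g f)"
proof -
  obtain f' where f': "f' \<in> hom C Y X" "Cmp C f' f = Idm C X" "Cmp C f f' = Idm C Y"
    using iso_inv_arr assms by blast
  obtain g' where g': "g' \<in> hom C Z Y" "Cmp C g' g = Idm C Y" "Cmp C g g' = Idm C Z"
    using iso_inv_arr assms by blast
  have gf: "Cmp C g f \<in> hom C X Z" using comp_hom f g by blast
  have "Cmp C (Cmp C f' g') (Cmp C g f) = Cmp C f' (Cmp C g' (Cmp C g f))"
    using comp_assoc[OF gf g'(1) f'(1)] by simp
  also have "\<dots> = Cmp C f' (Cmp C (Cmp C g' g) f)" using comp_assoc[OF f g g'(1)] by simp
  also have "\<dots> = Idm C X" using g'(2) comp_id_left[OF f] f'(2) by simp
  finally have 1: "Cmp C (Cmp C f' g') (Cmp C g f) = Idm C X" .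
  have fg: "Cmp C f' g' \<in> hom C Z X" using comp_hom f'(1) g'(1) by blast
  have "Cmp C (Cmp C g f) (Cmp C f' g') = Cmp C g (Cmp C f (Cmp C f' g'))"
    using comp_assoc[OF fg f g] by simp
  also have "\<dots> = Cmp C g (Cmp C (Cmp C f f') g')" using comp_assoc[OF g'(1) f'(1) f] by simp
  also have "\<dots> = Idm C Z" using f'(3) comp_id_left[OF g'(1)] g'(3) by simp
  finally have 2: "Cmp C (Cmp C g f) (Cmp C f' g') = Idm C Z" .
  note 1 2
  then show ?thesis using isoI[OF gf fg] by blast
qed

lemma comp_inv_arr_cancel:
  assumes f: "f \<in> hom C Z Y" and s: "s \<in> hom C Z X" "is_iso C s" and t: "t \<in> hom C W Z"
  shows "Cmp C (Cmp C f (inv_arr C s)) (Cmp C s t) = Cmp C f t"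
proof -
  have i: "inv_arr C s \<in> hom C X Z" "Cmp C (inv_arr C s) s = Idm C Z"
    using iso_inv_arr[OF s(2,1)] by auto
  have "Cmp C (Cmp C f (inv_arr C s)) (Cmp C s t) = Cmp C f (Cmp C (inv_arr C s) (Cmp C s t))"
    using comp_assoc[OF comp_hom[OF t s(1)] i(1) f] by simp
  also have "\<dots> = Cmp C f t" using comp_assoc[OF t s(1) i(1)] i(2) comp_id_left[OF t] by simp
  finally show ?thesis .
qed

lemma zero_if_iso_comp_zero:
  assumes f: "f \<in> hom C Y Z" and "is_iso C f" and g: "g \<in> hom C X Y"
    and e: "Cmp C f g = Zer C X Z"
  shows "g = Zer C X Y"
proof -
  obtain f' where f': "f' \<in> hom C Z Y" "Cmp C f' f = Idm C Y"
    using iso_inv_arr assms by blast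
  have "g = Cmp C (Cmp C f' f) g" using f' comp_id_left g by metis
  also have "\<dots> = Cmp C f' (Zer C X Z)" using comp_assoc[OF g f f'(1)] e by simp
  finally show ?thesis using comp_zero_right[OF f'(1)] hom_ob[OF g] by simp
qed

end

section \<open>Additive functors\<close>

locale additive_functor = S: additive_category C + T: additive_category D
  for C :: "('o,'m,'x) addcat_scheme" and D :: "('p,'n,'y) addcat_scheme" +
  fixes Fo :: "'o \<Rightarrow> 'p" and Fm :: "'m \<Rightarrow> 'n"
  assumes additive_functor: "is_additive_functor C D Fo Fm"
begin

lemma preserves_ob: "X \<in> Ob C \<Longrightarrow> Fo X \<in> Ob D"
  using additive_functor unfolding is_additive_functor_def is_functor_def by blast

lemma preserves_hom:
  assumes "f \<in> hom C X Y"
  shows "Fm f \<in> hom D (Fo X) (Fo Y)"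
proof -
  have "X \<in> Ob C" "Y \<in> Ob C" using assms S.hom_ob by blast+
  then show ?thesis
    using additive_functor assms unfolding is_additive_functor_def is_functor_def by blast
qed

lemma preserves_id: "X \<in> Ob C \<Longrightarrow> Fm (Idm C X) = Idm D (Fo X)"
  using additive_functor unfolding is_additive_functor_def is_functor_def by blast

lemma preserves_comp:
  assumes "f \<in> hom C X Y" "g \<in> hom C Y Z"
  shows "Fm (Cmp C g f) = Cmp D (Fm g) (Fm f)"
proof -
  have "X \<in> Ob C" "Y \<in> Ob C" "Z \<in> Ob C" using assms S.hom_ob by blast+
  then show ?thesis
    using additive_functor assms unfolding is_additive_functor_def is_functor_def by blast
qed

lemma preserves_add:
  assumes "f \<in> hom C X Y" "g \<in> hom C X Y"
  shows "Fm (Add C f g) = Add D (Fm f) (Fm g)"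
proof -
  have "X \<in> Ob C" "Y \<in> Ob C" using assms S.hom_ob by blast+
  then show ?thesis using additive_functor assms unfolding is_additive_functor_def by blast
qed

lemma preserves_zero:
  assumes "X \<in> Ob C" "Y \<in> Ob C"
  shows "Fm (Zer C X Y) = Zer D (Fo X) (Fo Y)"
proof -
  have z: "Zer C X Y \<in> hom C X Y" using assms S.zero_hom by blast
  have "Add D (Fm (Zer C X Y)) (Fm (Zer C X Y)) = Fm (Zer C X Y)"
    using preserves_add[OF z z] S.add_zero_right[OF z] by simp
  then show ?thesis using T.add_idem_zero preserves_hom[OF z] by blast
qed

lemma preserves_neg:
  assumes f: "f \<in> hom C X Y"
  shows "Fm (Neg C f) = Neg D (Fm f)"
proof -
  have "Add D (Fm f) (Fm (Neg C f)) = Zer D (Fo X) (Fo Y)"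
    using preserves_add[OF f S.neg_hom[OF f]] S.add_neg_right[OF f] preserves_zero S.hom_ob[OF f]
      by simp
  then show ?thesis using T.neg_unique preserves_hom f S.neg_hom by metis
qed

lemma preserves_iso:
  assumes f: "f \<in> hom C X Y" and i: "is_iso C f"
  shows "is_iso D (Fm f)"
proof -
  obtain g where g: "g \<in> hom C Y X" "Cmp C g f = Idm C X" "Cmp C f g = Idm C Y"
    using S.iso_inv_arr[OF i f] by blast
  have "Cmp D (Fm g) (Fm f) = Idm D (Fo X)"
    using preserves_comp[OF f g(1)] g(2) preserves_id S.hom_ob[OF f] by simp
  moreover have "Cmp D (Fm f) (Fm g) = Idm D (Fo Y)"
    using preserves_comp[OF g(1) f] g(3) preserves_id S.hom_ob[OF f] by simp
  ultimately show ?thesis using T.isoI preserves_hom f g(1) by blast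
qed

end

section \<open>Triangulated categories\<close>

locale triangulated_category = additive_category C for C :: "('o,'m,'x) tricat_scheme" +
  assumes triangulated: "is_triangulated C"
begin

sublocale sh: additive_functor C C "Sh C" "ShM C"
  using triangulated unfolding is_triangulated_def by unfold_locales (elim conjE)

lemma ShM_bij: "X \<in> Ob C \<Longrightarrow> Y \<in> Ob C \<Longrightarrow> bij_betw (ShM C) (hom C X Y) (hom C (Sh C X) (Sh C Y))"
  using triangulated unfolding is_triangulated_def by (elim conjE) blast

lemma ShM_inj:
  assumes "f \<in> hom C X Y" "g \<in> hom C X Y" "ShM C f = ShM C g"
  shows "f = g"
proof -
  have "X \<in> Ob C" "Y \<in> Ob C" using assms hom_ob by blast+
  then have "inj_on (ShM C) (hom C X Y)" using ShM_bij unfolding bij_betw_def by blast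
  then show ?thesis using assms unfolding inj_on_def by blast
qed

lemma ShM_surj:
  assumes "g \<in> hom C (Sh C X) (Sh C Y)" "X \<in> Ob C" "Y \<in> Ob C"
  obtains f where "f \<in> hom C X Y" "ShM C f = g"
proof -
  have "g \<in> ShM C ` hom C X Y" using ShM_bij[OF assms(2,3)] assms(1) unfolding bij_betw_def by simp
  then show ?thesis using that by blast
qed

lemma Sh_ess_surj:
  assumes "Y \<in> Ob C"
  obtains X f where "X \<in> Ob C" "f \<in> hom C (Sh C X) Y" "is_iso C f"
  using triangulated assms unfolding is_triangulated_def by (elim conjE) metis

lemma dist_is_triangle: "t \<in> Dist C \<Longrightarrow> is_triangle C t"
  using triangulated unfolding is_triangulated_def by (elim conjE) blast

lemma dist_hom:
  assumes "(u,v,w) \<in> Dist C"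
  shows "u \<in> hom C (Dom C u) (Cod C u)" "v \<in> hom C (Cod C u) (Cod C v)"
    "w \<in> hom C (Cod C v) (Sh C (Dom C u))"
  using dist_is_triangle[OF assms] unfolding is_triangle_def by (auto simp: hom_def)

lemma dist_closed_iso: "t \<in> Dist C \<Longrightarrow> is_tri_morph C t t' (a, b, c) \<Longrightarrow>
  is_iso C a \<Longrightarrow> is_iso C b \<Longrightarrow> is_iso C c \<Longrightarrow> t' \<in> Dist C"
  using triangulated unfolding is_triangulated_def by (elim conjE) blast

lemma dist_id_zero:
  "X \<in> Ob C \<Longrightarrow> is_zero_obj C Z0 \<Longrightarrow> (Idm C X, Zer C X Z0, Zer C Z0 (Sh C X)) \<in> Dist C"
  using triangulated unfolding is_triangulated_def by (elim conjE) blast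

lemma dist_complete: "u \<in> Ar C \<Longrightarrow> \<exists>v w. (u, v, w) \<in> Dist C"
  using triangulated unfolding is_triangulated_def by (elim conjE) blast

lemma dist_rotate_iff:
  "(u, v, w) \<in> Dist C \<longleftrightarrow> (is_triangle C (u, v, w) \<and> (v, w, Neg C (ShM C u)) \<in> Dist C)"
  using triangulated unfolding is_triangulated_def by (elim conjE) blast

lemma dist_rotate: "(u, v, w) \<in> Dist C \<Longrightarrow> (v, w, Neg C (ShM C u)) \<in> Dist C"
  using dist_rotate_iff by blast

lemma dist_morph_exists: "(u, v, w) \<in> Dist C \<Longrightarrow> (u', v', w') \<in> Dist C \<Longrightarrow>
          a \<in> hom C (Dom C u) (Dom C u') \<Longrightarrow> b \<in> hom C (Cod C u) (Cod C u') \<Longrightarrow>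
          Cmp C b u = Cmp C u' a \<Longrightarrow>
          (\<exists>c. is_tri_morph C (u, v, w) (u', v', w') (a, b, c))"
  using triangulated unfolding is_triangulated_def by (elim conjE) metis

lemma Sh_zero_obj:
  assumes z: "is_zero_obj C Z"
  shows "is_zero_obj C (Sh C Z)"
proof -
  have Z: "Z \<in> Ob C" using zero_obj_ob z by blast
  have "Idm C (Sh C Z) = ShM C (Idm C Z)" using sh.preserves_id Z by simp
  also have "\<dots> = ShM C (Zer C Z Z)" using zero_obj_id z by simp
  also have "\<dots> = Zer C (Sh C Z) (Sh C Z)" using sh.preserves_zero Z by simp
  finally show ?thesis using zero_objI sh.preserves_ob Z by blast
qed

lemma zero_obj_if_Sh_zero_obj:
  assumes X: "X \<in> Ob C" and z: "is_zero_obj C (Sh C X)"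
  shows "is_zero_obj C X"
proof -
  have "ShM C (Idm C X) = Idm C (Sh C X)" using sh.preserves_id X by simp
  also have "\<dots> = Zer C (Sh C X) (Sh C X)" using zero_obj_id z by simp
  also have "\<dots> = ShM C (Zer C X X)" using sh.preserves_zero X by simp
  finally have "Idm C X = Zer C X X" using ShM_inj id_hom zero_hom X by blast
  then show ?thesis using zero_objI X by blast
qed

lemma dist_third_hom:
  assumes d: "(u,v,w) \<in> Dist C" and u: "u \<in> hom C X Y" and v: "v \<in> hom C Y Z"
  shows "w \<in> hom C Z (Sh C X)"
  using dist_hom(3)[OF d] hom_dom[OF u] hom_cod[OF v] by simp

lemma dist_comp_zero:
  assumes d: "(u,v,w) \<in> Dist C" and u: "u \<in> hom C X Y" and v: "v \<in> hom C Y Z"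
  shows "Cmp C v u = Zer C X Z"
proof -
  obtain Z0 where z0: "is_zero_obj C Z0" using ex_zero_obj by blast
  have X: "X \<in> Ob C" using hom_ob u by blast
  have S: "(Idm C X, Zer C X Z0, Zer C Z0 (Sh C X)) \<in> Dist C" using dist_id_zero X z0 by blast
  have i: "Idm C X \<in> hom C X X" using id_hom X by blast
  have zz: "Zer C X Z0 \<in> hom C X Z0" using zero_hom X zero_obj_ob z0 by blast
  obtain c
    where m: "is_tri_morph C (Idm C X, Zer C X Z0, Zer C Z0 (Sh C X)) (u, v, w) (Idm C X, u, c)"
    using dist_morph_exists[OF S d, of "Idm C X" u] hom_dom[OF i] hom_cod[OF i] hom_dom[OF u]
      hom_cod[OF u] i u
      comp_id_right[OF u] by force
  then have c: "c \<in> hom C Z0 Z" "Cmp C c (Zer C X Z0) = Cmp C v u"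
    unfolding is_tri_morph_def using hom_cod[OF zz] hom_cod[OF v] by auto
  then show ?thesis using comp_through_zero_obj[OF z0 zz c(1)] by simp
qed

lemma dist_from_zero_obj:
  assumes z: "is_zero_obj C Z" and T: "T \<in> Ob C"
  shows "(Zer C Z T, Idm C T, Zer C T (Sh C Z)) \<in> Dist C"
proof -
  have Z: "Z \<in> Ob C" and sz: "is_zero_obj C (Sh C Z)" using zero_obj_ob Sh_zero_obj z by blast+
  have zT: "Zer C Z T \<in> hom C Z T" using zero_hom[OF Z T] .
  have "Neg C (ShM C (Zer C Z T)) = Zer C (Sh C Z) (Sh C T)"
    using hom_from_zero_obj[OF sz neg_hom[OF sh.preserves_hom[OF zT]]] .
  moreover have "is_triangle C (Zer C Z T, Idm C T, Zer C T (Sh C Z))"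
    unfolding is_triangle_def using zT id_hom[OF T] zero_hom[OF T zero_obj_ob[OF sz]]
    by (simp add: hom_def)
  ultimately show ?thesis
    using dist_rotate_iff[of "Zer C Z T" "Idm C T" "Zer C T (Sh C Z)"] dist_id_zero[OF T sz] by simp
qed

lemma dist_weak_cokernel:
  assumes d: "(u,v,w) \<in> Dist C" and u: "u \<in> hom C X Y" and v: "v \<in> hom C Y Z"
    and x: "x \<in> hom C Y T" and e: "Cmp C x u = Zer C X T"
  obtains y where "y \<in> hom C Z T" "x = Cmp C y v"
proof -
  obtain Z0 where z0: "is_zero_obj C Z0" using ex_zero_obj by blast
  have T: "T \<in> Ob C" and X: "X \<in> Ob C" and Z0: "Z0 \<in> Ob C" using hom_ob x u zero_obj_ob z0 by blast+
  have zX: "Zer C X Z0 \<in> hom C X Z0" and zT: "Zer C Z0 T \<in> hom C Z0 T"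
    using zero_hom X T Z0 by blast+
  have "Cmp C x u = Cmp C (Zer C Z0 T) (Zer C X Z0)"
    using e comp_through_zero_obj[OF z0 zX zT] by simp
  then obtain c
    where "is_tri_morph C (u, v, w) (Zer C Z0 T, Idm C T, Zer C T (Sh C Z0)) (Zer C X Z0, x, c)"
    using dist_morph_exists[OF d dist_from_zero_obj[OF z0 T]] zX x hom_dom[OF u] hom_cod[OF u]
      hom_dom[OF zT] hom_cod[OF zT] by metis
  then have "c \<in> hom C Z T" "Cmp C c v = Cmp C (Idm C T) x"
    unfolding is_tri_morph_def using hom_cod[OF id_hom[OF T]] hom_cod[OF v] by auto
  then show ?thesis using that comp_id_left[OF x] by simp
qed

lemma dist_weak_kernel:
  assumes d: "(u,v,w) \<in> Dist C" and u: "u \<in> hom C X Y" and v: "v \<in> hom C Y Z"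
    and x: "x \<in> hom C T Y" and e: "Cmp C v x = Zer C T Z"
  obtains y where "y \<in> hom C T X" "x = Cmp C u y"
proof -
  obtain Z0 where z0: "is_zero_obj C Z0" using ex_zero_obj by blast
  have T: "T \<in> Ob C" and X: "X \<in> Ob C" and Y: "Y \<in> Ob C" and Z: "Z \<in> Ob C"
    using hom_ob x u v by blast+
  have Z0: "Z0 \<in> Ob C" using z0 zero_obj_ob by blast
  have w: "w \<in> hom C Z (Sh C X)" using dist_third_hom[OF d u v] .
  have S: "(Idm C T, Zer C T Z0, Zer C Z0 (Sh C T)) \<in> Dist C" using dist_id_zero T z0 by blast
  have rS: "(Zer C T Z0, Zer C Z0 (Sh C T), Neg C (ShM C (Idm C T))) \<in> Dist C"
    using dist_rotate[OF S] .
  have rd: "(v, w, Neg C (ShM C u)) \<in> Dist C" using dist_rotate[OF d] .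
  have zT: "Zer C T Z0 \<in> hom C T Z0" using zero_hom T Z0 by blast
  have zZ: "Zer C Z0 Z \<in> hom C Z0 Z" using zero_hom Z Z0 by blast
  have zS: "Zer C Z0 (Sh C T) \<in> hom C Z0 (Sh C T)" using zero_hom sh.preserves_ob T Z0 by blast
  have eq: "Cmp C (Zer C Z0 Z) (Zer C T Z0) = Cmp C v x"
    using e comp_through_zero_obj[OF z0 zT zZ] by simp
  have a1: "x \<in> hom C (Dom C (Zer C T Z0)) (Dom C v)" using x hom_dom[OF v] hom_dom[OF zT] by simp
  have a2: "Zer C Z0 Z \<in> hom C (Cod C (Zer C T Z0)) (Cod C v)"
    using zZ hom_cod[OF v] hom_cod[OF zT] by simp
  obtain c where m: "is_tri_morph C (Zer C T Z0, Zer C Z0 (Sh C T), Neg C (ShM C (Idm C T)))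
       (v, w, Neg C (ShM C u)) (x, Zer C Z0 Z, c)"
    using dist_morph_exists[OF rS rd a1 a2 eq] by blast
  then have c: "c \<in> hom C (Sh C T) (Sh C X)"
    and ce: "Cmp C (ShM C x) (Neg C (ShM C (Idm C T))) = Cmp C (Neg C (ShM C u)) c"
    unfolding is_tri_morph_def using hom_cod[OF zS] hom_cod[OF w] by auto
  obtain y where y: "y \<in> hom C T X" "ShM C y = c" using ShM_surj[OF c T X] by blast
  have sx: "ShM C x \<in> hom C (Sh C T) (Sh C Y)" using sh.preserves_hom[OF x] .
  have su: "ShM C u \<in> hom C (Sh C X) (Sh C Y)" using sh.preserves_hom[OF u] .
  have iST: "Idm C (Sh C T) \<in> hom C (Sh C T) (Sh C T)" using id_hom sh.preserves_ob T by blast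
  have "Cmp C (ShM C x) (Neg C (ShM C (Idm C T))) = Neg C (ShM C x)"
    using sh.preserves_id[OF T] comp_neg_right[OF iST sx] comp_id_right[OF sx] by simp
  moreover have "Cmp C (Neg C (ShM C u)) c = Neg C (ShM C (Cmp C u y))"
    using y comp_neg_left[OF c su] sh.preserves_comp[OF y(1) u] by simp
  ultimately have "Neg C (ShM C x) = Neg C (ShM C (Cmp C u y))" using ce by simp
  then have "ShM C x = ShM C (Cmp C u y)"
    using neg_inj[OF sx sh.preserves_hom[OF comp_hom[OF y(1) u]]] by simp
  then have "x = Cmp C u y" using ShM_inj[OF x comp_hom[OF y(1) u]] by simp
  then show ?thesis using that y(1) by blast
qed

lemma dist_cancel_left_if_cone_zero:
  assumes d: "(u,v,w) \<in> Dist C" and u: "u \<in> hom C X Y" and v: "v \<in> hom C Y Z"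
    and z0: "is_zero_obj C Z" and z: "z \<in> hom C T X" and e: "Cmp C u z = Zer C T Y"
  shows "z = Zer C T X"
proof -
  have T: "T \<in> Ob C" and X: "X \<in> Ob C" and Y: "Y \<in> Ob C" using hom_ob z u by blast+
  have w: "w \<in> hom C Z (Sh C X)" using dist_third_hom[OF d u v] .
  have r2: "(w, Neg C (ShM C u), Neg C (ShM C v)) \<in> Dist C"
    using dist_rotate[OF dist_rotate[OF d]] .
  have su: "ShM C u \<in> hom C (Sh C X) (Sh C Y)" using sh.preserves_hom[OF u] .
  have nu: "Neg C (ShM C u) \<in> hom C (Sh C X) (Sh C Y)" using neg_hom[OF su] .
  have sz: "ShM C z \<in> hom C (Sh C T) (Sh C X)" using sh.preserves_hom[OF z] .
  have "Cmp C (Neg C (ShM C u)) (ShM C z) = Neg C (ShM C (Cmp C u z))"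
    using comp_neg_left[OF sz su] sh.preserves_comp[OF z u] by simp
  also have "\<dots> = Zer C (Sh C T) (Sh C Y)"
    using e sh.preserves_zero[OF T Y] neg_zero sh.preserves_ob T Y by simp
  finally have ee: "Cmp C (Neg C (ShM C u)) (ShM C z) = Zer C (Sh C T) (Sh C Y)" .
  obtain y' where y': "y' \<in> hom C (Sh C T) Z" "ShM C z = Cmp C w y'"
    using dist_weak_kernel[OF r2 w nu sz ee] by blast
  have "ShM C z = Zer C (Sh C T) (Sh C X)" using y' comp_through_zero_obj[OF z0 y'(1) w] by simp
  also have "\<dots> = ShM C (Zer C T X)" using sh.preserves_zero[OF T X] by simp
  finally show ?thesis using ShM_inj[OF z zero_hom[OF T X]] by simp
qed

lemma iso_if_cone_zero:
  assumes d: "(u,v,w) \<in> Dist C" and u: "u \<in> hom C X Y" and v: "v \<in> hom C Y Z"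
    and z0: "is_zero_obj C Z"
  shows "is_iso C u"
proof -
  have X: "X \<in> Ob C" and Y: "Y \<in> Ob C" using hom_ob u by blast+
  have iY: "Idm C Y \<in> hom C Y Y" using id_hom Y .
  have iX: "Idm C X \<in> hom C X X" using id_hom X .
  have "Cmp C v (Idm C Y) = Zer C Y Z" using hom_to_zero_obj[OF z0 comp_hom[OF iY v]] .
  then obtain y where y: "y \<in> hom C Y X" "Idm C Y = Cmp C u y"
    using dist_weak_kernel[OF d u v iY] by blast
  have yu: "Cmp C y u \<in> hom C X X" using comp_hom[OF u y(1)] .
  have ni: "Neg C (Idm C X) \<in> hom C X X" using neg_hom[OF iX] .
  \<comment> \<open>y is a right inverse of u, and u cancels on the left, so u (y u - 1) = 0 gives y u = 1.\<close>
  define zz where "zz = Add C (Cmp C y u) (Neg C (Idm C X))"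
  have zz: "zz \<in> hom C X X" unfolding zz_def using add_hom[OF yu ni] .
  have "Cmp C u zz = Add C (Cmp C u (Cmp C y u)) (Cmp C u (Neg C (Idm C X)))"
    unfolding zz_def using comp_add_right[OF yu ni u] .
  also have "Cmp C u (Cmp C y u) = u" using comp_assoc[OF u y(1) u] y(2) comp_id_left[OF u] by simp
  also have "Cmp C u (Neg C (Idm C X)) = Neg C u"
    using comp_neg_right[OF iX u] comp_id_right[OF u] by simp
  also have "Add C u (Neg C u) = Zer C X Y" using add_neg_right[OF u] .
  finally have "zz = Zer C X X" using dist_cancel_left_if_cone_zero[OF d u v z0 zz] by blast
  then have "Cmp C y u = Idm C X" using eq_if_diff_zero[OF yu iX] unfolding zz_def by blast
  then show ?thesis using isoI[OF u y(1)] y(2) by simp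
qed

lemma dist_comp_third_zero:
  assumes d: "(u,v,w) \<in> Dist C" and u: "u \<in> hom C X Y" and v: "v \<in> hom C Y Z"
  shows "Cmp C (ShM C u) w = Zer C Z (Sh C Y)"
proof -
  have w: "w \<in> hom C Z (Sh C X)" using dist_third_hom[OF d u v] .
  have su: "ShM C u \<in> hom C (Sh C X) (Sh C Y)" using sh.preserves_hom[OF u] .
  have "Cmp C (Neg C (ShM C u)) w = Zer C Z (Sh C Y)"
    using dist_comp_zero[OF dist_rotate[OF dist_rotate[OF d]] w neg_hom[OF su]] .
  then show ?thesis using comp_neg_left[OF w su] neg_eq_zeroD comp_hom[OF w su] by metis
qed

lemma cone_zero_if_iso:
  assumes d: "(u,v,w) \<in> Dist C" and u: "u \<in> hom C X Y" and v: "v \<in> hom C Y Z"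
    and i: "is_iso C u"
  shows "is_zero_obj C Z"
proof -
  have Z: "Z \<in> Ob C" using hom_ob v by blast
  obtain g where g: "g \<in> hom C Y X" "Cmp C u g = Idm C Y"
    using iso_inv_arr[OF i u] by blast
  have w: "w \<in> hom C Z (Sh C X)" using dist_third_hom[OF d u v] .
  have su: "ShM C u \<in> hom C (Sh C X) (Sh C Y)" using sh.preserves_hom[OF u] .
  have "v = Cmp C v (Cmp C u g)" using g(2) comp_id_right[OF v] by simp
  also have "\<dots> = Cmp C (Cmp C v u) g" using comp_assoc[OF g(1) u v] .
  also have "\<dots> = Zer C Y Z" using dist_comp_zero[OF d u v] comp_zero_left[OF g(1) Z] by simp
  finally have v0: "v = Zer C Y Z" .
  have "w = Zer C Z (Sh C X)"
    using zero_if_iso_comp_zero[OF su sh.preserves_iso[OF u i] w] dist_comp_third_zero[OF d u v] .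
  then have "Cmp C w (Idm C Z) = Zer C Z (Sh C X)" using comp_id_right[OF w] by simp
  then obtain y where y: "y \<in> hom C Z Y" "Idm C Z = Cmp C v y"
    using dist_weak_kernel[OF dist_rotate[OF d] v w id_hom[OF Z]] by blast
  then have "Idm C Z = Zer C Z Z" using v0 comp_zero_left[OF y(1) Z] by simp
  then show ?thesis using zero_objI Z by blast
qed

lemma iso_iff_cone_zero:
  assumes "(u,v,w) \<in> Dist C" and "u \<in> hom C X Y" and "v \<in> hom C Y Z"
  shows "is_iso C u \<longleftrightarrow> is_zero_obj C Z"
  using iso_if_cone_zero cone_zero_if_iso assms by blast

lemma iso_second_iff_first_zero:
  assumes d: "(u,v,w) \<in> Dist C" and u: "u \<in> hom C X Y" and v: "v \<in> hom C Y Z"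
  shows "is_iso C v \<longleftrightarrow> is_zero_obj C X"
  using iso_iff_cone_zero[OF dist_rotate[OF d] v dist_third_hom[OF d u v]]
    Sh_zero_obj zero_obj_if_Sh_zero_obj hom_ob(1)[OF u] by blast

lemma dist_third_zero_if_split_mono:
  assumes d: "(u,v,w) \<in> Dist C" and u: "u \<in> hom C X Y" and v: "v \<in> hom C Y Z"
    and r: "r \<in> hom C Y X" "Cmp C r u = Idm C X"
  shows "w = Zer C Z (Sh C X)"
proof -
  have w: "w \<in> hom C Z (Sh C X)" using dist_third_hom[OF d u v] .
  have su: "ShM C u \<in> hom C (Sh C X) (Sh C Y)" using sh.preserves_hom[OF u] .
  have sr: "ShM C r \<in> hom C (Sh C Y) (Sh C X)" using sh.preserves_hom[OF r(1)] .
  have "w = Cmp C (ShM C (Cmp C r u)) w"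
    using r(2) sh.preserves_id hom_ob(1)[OF u] comp_id_left[OF w] by simp
  also have "\<dots> = Cmp C (ShM C r) (Cmp C (ShM C u) w)"
    using sh.preserves_comp[OF u r(1)] comp_assoc[OF w su sr] by simp
  also have "\<dots> = Zer C Z (Sh C X)"
    using dist_comp_third_zero[OF d u v] comp_zero_right[OF sr] hom_ob(2)[OF v] by simp
  finally show ?thesis .
qed

lemma dist_factor_through_first:
  assumes d: "(u,v,w) \<in> Dist C" and u: "u \<in> hom C X Y" and v: "v \<in> hom C Y Z"
    and a: "a \<in> hom C X D" and aw: "Cmp C (ShM C a) w = Zer C Z (Sh C D)"
  obtains m where "m \<in> hom C Y D" "a = Cmp C m u"
proof -
  have Y: "Y \<in> Ob C" and D: "D \<in> Ob C" using hom_ob u a by blast+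
  have w: "w \<in> hom C Z (Sh C X)" using dist_third_hom[OF d u v] .
  have su: "ShM C u \<in> hom C (Sh C X) (Sh C Y)" using sh.preserves_hom[OF u] .
  obtain y where y: "y \<in> hom C (Sh C Y) (Sh C D)" "ShM C a = Cmp C y (Neg C (ShM C u))"
    using dist_weak_cokernel[OF dist_rotate[OF dist_rotate[OF d]] w neg_hom[OF su]
        sh.preserves_hom[OF a] aw] .
  obtain m where m: "m \<in> hom C Y D" "ShM C m = y" using ShM_surj[OF y(1) Y D] .
  have "ShM C a = ShM C (Cmp C (Neg C m) u)"
    using y(2) m(2) comp_neg_right[OF su y(1)] comp_neg_left[OF su y(1)]
      sh.preserves_comp[OF u neg_hom[OF m(1)]] sh.preserves_neg[OF m(1)] by simp
  then have "a = Cmp C (Neg C m) u" by (rule ShM_inj[OF a comp_hom[OF u neg_hom[OF m(1)]]])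
  then show ?thesis using that neg_hom[OF m(1)] by blast
qed

lemma iso_if_iso_ShM:
  assumes f: "f \<in> hom C X Y" and i: "is_iso C (ShM C f)"
  shows "is_iso C f"
proof -
  have X: "X \<in> Ob C" and Y: "Y \<in> Ob C" using hom_ob f by blast+
  have sf: "ShM C f \<in> hom C (Sh C X) (Sh C Y)" using sh.preserves_hom[OF f] .
  obtain h' where h': "h' \<in> hom C (Sh C Y) (Sh C X)" "Cmp C h' (ShM C f) = Idm C (Sh C X)"
    "Cmp C (ShM C f) h' = Idm C (Sh C Y)" using iso_inv_arr[OF i sf] by blast
  obtain h where h: "h \<in> hom C Y X" "ShM C h = h'" using ShM_surj[OF h'(1) Y X] by blast
  have "ShM C (Cmp C h f) = ShM C (Idm C X)"
    using sh.preserves_comp[OF f h(1)] h h'(2) sh.preserves_id[OF X] by simp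
  then have 1: "Cmp C h f = Idm C X" using ShM_inj[OF comp_hom[OF f h(1)] id_hom[OF X]] by blast
  have "ShM C (Cmp C f h) = ShM C (Idm C Y)"
    using sh.preserves_comp[OF h(1) f] h h'(3) sh.preserves_id[OF Y] by simp
  then have 2: "Cmp C f h = Idm C Y" using ShM_inj[OF comp_hom[OF h(1) f] id_hom[OF Y]] by blast
  show ?thesis using isoI[OF f h(1) 1 2] .
qed

lemma dist_replace_cone_iso:
  assumes d: "(u,v,w) \<in> Dist C" and u: "u \<in> hom C X Y" and v: "v \<in> hom C Y Z"
    and \<phi>: "\<phi> \<in> hom C Z' Z" "is_iso C \<phi>"
  shows "(u, Cmp C (inv_arr C \<phi>) v, Cmp C w \<phi>) \<in> Dist C"
proof -
  define \<psi> where "\<psi> = inv_arr C \<phi>"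
  have \<psi>: "\<psi> \<in> hom C Z Z'" "Cmp C \<phi> \<psi> = Idm C Z"
    using iso_inv_arr[OF \<phi>(2,1)] unfolding \<psi>_def by auto
  have X: "X \<in> Ob C" and Y: "Y \<in> Ob C" using hom_ob u by blast+
  have w: "w \<in> hom C Z (Sh C X)" using dist_third_hom[OF d u v] .
  have \<psi>v: "Cmp C \<psi> v \<in> hom C Y Z'" using comp_hom[OF v \<psi>(1)] .
  have w\<phi>: "Cmp C w \<phi> \<in> hom C Z' (Sh C X)" using comp_hom[OF \<phi>(1) w] .
  have "Cmp C (ShM C (Idm C X)) w = Cmp C (Cmp C w \<phi>) \<psi>"
    using sh.preserves_id[OF X] comp_id_left[OF w] comp_assoc[OF \<psi>(1) \<phi>(1) w] \<psi>(2)
      comp_id_right[OF w] by simp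
  then have "is_tri_morph C (u, v, w) (u, Cmp C \<psi> v, Cmp C w \<phi>) (Idm C X, Idm C Y, \<psi>)"
    unfolding is_tri_morph_def is_triangle_def
    using d u v w \<psi>(1) \<psi>v w\<phi> id_hom[OF X] id_hom[OF Y] comp_id_left[OF u] comp_id_right[OF u]
      comp_id_right[OF v] comp_id_right[OF \<psi>v] by (simp add: hom_def)
  then show ?thesis
    using dist_closed_iso[OF d] id_iso[OF X] id_iso[OF Y] iso_inv_arr_iso[OF \<phi>(2,1)]
    unfolding \<psi>_def by blast
qed

lemma dist_extend_left:
  assumes u: "u \<in> hom C X Y"
  obtains D k c where "k \<in> hom C D X" "(k, u, c) \<in> Dist C"
proof -
  have X: "X \<in> Ob C" using hom_ob u by blast
  obtain p q where d: "(u, p, q) \<in> Dist C" using dist_complete hom_ar[OF u] by blast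
  define P where "P = Cod C p"
  have p: "p \<in> hom C Y P" using dist_hom(2)[OF d] hom_cod[OF u] unfolding P_def by simp
  have q: "q \<in> hom C P (Sh C X)" using dist_third_hom[OF d u p] .
  obtain D \<phi> where D: "D \<in> Ob C" and \<phi>: "\<phi> \<in> hom C (Sh C D) P" "is_iso C \<phi>"
    using Sh_ess_surj hom_ob(2)[OF p] by metis
  \<comment> \<open>Rotation only goes forwards, so the cone is first replaced by a shifted object.\<close>
  have d': "(u, Cmp C (inv_arr C \<phi>) p, Cmp C q \<phi>) \<in> Dist C"
    using dist_replace_cone_iso[OF d u p \<phi>] .
  obtain k where k: "k \<in> hom C D X" "ShM C k = Cmp C q \<phi>"
    using ShM_surj[OF comp_hom[OF \<phi>(1) q] D X] .
  have "Neg C (ShM C (Neg C k)) = Cmp C q \<phi>"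
    using sh.preserves_neg[OF k(1)] neg_neg[OF sh.preserves_hom[OF k(1)]] k(2) by simp
  moreover have "is_triangle C (Neg C k, u, Cmp C (inv_arr C \<phi>) p)"
    using comp_hom[OF p iso_inv_arr[OF \<phi>(2,1), THEN conjunct1]] neg_hom[OF k(1)] u
    unfolding is_triangle_def hom_def by auto
  ultimately have "(Neg C k, u, Cmp C (inv_arr C \<phi>) p) \<in> Dist C"
    using dist_rotate_iff[of "Neg C k" u "Cmp C (inv_arr C \<phi>) p"] d' by simp
  then show ?thesis using that neg_hom[OF k(1)] by blast
qed

end

section \<open>Triangle functors and their kernels\<close>

locale triangle_functor = A: triangulated_category A + B: triangulated_category B
  for A :: "('o,'m,'x) tricat_scheme" and B :: "('p,'n,'y) tricat_scheme" +
  fixes Fo :: "'o \<Rightarrow> 'p" and Fm :: "'m \<Rightarrow> 'n" and \<xi> :: "'o \<Rightarrow> 'n"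
  assumes triangle_functor: "is_triangle_functor A B Fo Fm \<xi>"
begin

sublocale F: additive_functor A B Fo Fm
  using triangle_functor unfolding is_triangle_functor_def by unfold_locales blast

lemma xi_hom: "X \<in> Ob A \<Longrightarrow> \<xi> X \<in> hom B (Fo (Sh A X)) (Sh B (Fo X))"
  and xi_iso: "X \<in> Ob A \<Longrightarrow> is_iso B (\<xi> X)"
  using triangle_functor unfolding is_triangle_functor_def by blast+

lemma xi_natural:
  assumes "f \<in> hom A X Y"
  shows "Cmp B (\<xi> Y) (Fm (ShM A f)) = Cmp B (ShM B (Fm f)) (\<xi> X)"
  using triangle_functor assms A.hom_ob unfolding is_triangle_functor_def by blast

lemma F_dist:
  assumes d: "(u, v, w) \<in> Dist A" and u: "u \<in> hom A X Y"
  shows "(Fm u, Fm v, Cmp B (\<xi> X) (Fm w)) \<in> Dist B"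
  using triangle_functor d A.hom_dom[OF u] unfolding is_triangle_functor_def by blast

lemma F_iso_iff_cone_in_Ker:
  assumes d: "(u, v, w) \<in> Dist A" and u: "u \<in> hom A X Y" and v: "v \<in> hom A Y Z"
  shows "is_iso B (Fm u) \<longleftrightarrow> is_zero_obj B (Fo Z)"
  using B.iso_iff_cone_zero[OF F_dist[OF d u] F.preserves_hom[OF u] F.preserves_hom[OF v]] .

lemma F_iso_second_iff_first_in_Ker:
  assumes d: "(u, v, w) \<in> Dist A" and u: "u \<in> hom A X Y" and v: "v \<in> hom A Y Z"
  shows "is_iso B (Fm v) \<longleftrightarrow> is_zero_obj B (Fo X)"
  using B.iso_second_iff_first_zero[OF F_dist[OF d u] F.preserves_hom[OF u] F.preserves_hom[OF v]] .

lemma quasi_iso_iff: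
  assumes s: "s \<in> Ar A"
  shows "quasi_iso A (in_Ker B Fo) s \<longleftrightarrow> is_iso B (Fm s)"
proof -
  have "is_iso B (Fm s) \<longleftrightarrow> in_Ker B Fo (Cod A v)" if d: "(s, v, w) \<in> Dist A" for v w
    using F_iso_iff_cone_in_Ker[OF d A.dist_hom(1,2)[OF d]] unfolding in_Ker_def .
  then show ?thesis using A.dist_complete[OF s] unfolding quasi_iso_def by (metis s)
qed

lemma F_iso_if_F_iso_ShM:
  assumes a: "a \<in> hom A X D" and i: "is_iso B (Fm (ShM A a))"
  shows "is_iso B (Fm a)"
proof -
  have X: "X \<in> Ob A" and D: "D \<in> Ob A" using A.hom_ob a by blast+
  define \<iota> where "\<iota> = inv_arr B (\<xi> X)"
  have \<iota>: "\<iota> \<in> hom B (Sh B (Fo X)) (Fo (Sh A X))" "Cmp B (\<xi> X) \<iota> = Idm B (Sh B (Fo X))"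
    "is_iso B \<iota>"
    using B.iso_inv_arr[OF xi_iso[OF X] xi_hom[OF X]]
      B.iso_inv_arr_iso[OF xi_iso[OF X] xi_hom[OF X]]
    unfolding \<iota>_def by auto
  have Fa: "Fm a \<in> hom B (Fo X) (Fo D)" using F.preserves_hom[OF a] .
  have sFa: "ShM B (Fm a) \<in> hom B (Sh B (Fo X)) (Sh B (Fo D))" using B.sh.preserves_hom[OF Fa] .
  have Fsa: "Fm (ShM A a) \<in> hom B (Fo (Sh A X)) (Fo (Sh A D))"
    using F.preserves_hom[OF A.sh.preserves_hom[OF a]] .
  have "ShM B (Fm a) = Cmp B (ShM B (Fm a)) (Cmp B (\<xi> X) \<iota>)"
    using \<iota>(2) B.comp_id_right[OF sFa] by simp
  also have "\<dots> = Cmp B (Cmp B (\<xi> D) (Fm (ShM A a))) \<iota>"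
    using B.comp_assoc[OF \<iota>(1) xi_hom[OF X] sFa] xi_natural[OF a] by simp
  finally have "ShM B (Fm a) = Cmp B (Cmp B (\<xi> D) (Fm (ShM A a))) \<iota>" .
  moreover have "is_iso B (Cmp B (Cmp B (\<xi> D) (Fm (ShM A a))) \<iota>)"
    using B.iso_comp[OF \<iota>(1) B.comp_hom[OF Fsa xi_hom[OF D]]
        \<iota>(3) B.iso_comp[OF Fsa xi_hom[OF D] i xi_iso[OF D]]] .
  ultimately show ?thesis using B.iso_if_iso_ShM[OF Fa] by simp
qed

lemma F_third_zero_if_F_split_mono:
  assumes d: "(u, v, w) \<in> Dist A" and u: "u \<in> hom A X Y" and v: "v \<in> hom A Y Z"
    and sm: "is_split_mono B (Fm u)"
  shows "Fm w = Zer B (Fo Z) (Fo (Sh A X))"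
proof -
  have X: "X \<in> Ob A" using A.hom_ob u by blast
  have Fu: "Fm u \<in> hom B (Fo X) (Fo Y)" using F.preserves_hom[OF u] .
  obtain r where r: "r \<in> hom B (Fo Y) (Fo X)" "Cmp B r (Fm u) = Idm B (Fo X)"
    using sm unfolding is_split_mono_def B.hom_dom[OF Fu] B.hom_cod[OF Fu] by blast
  have "Cmp B (\<xi> X) (Fm w) = Zer B (Fo Z) (Sh B (Fo X))"
    using B.dist_third_zero_if_split_mono[OF F_dist[OF d u] Fu F.preserves_hom[OF v] r] .
  then show ?thesis
    using B.zero_if_iso_comp_zero[OF xi_hom[OF X] xi_iso[OF X]]
      F.preserves_hom[OF A.dist_third_hom[OF d u v]] by blast
qed

lemma objectiveE:
  assumes "objective A B Fo Fm" and f: "f \<in> hom A X Y" and "Fm f = Zer B (Fo X) (Fo Y)"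
  obtains K g h where "g \<in> hom A X K" "h \<in> hom A K Y" "f = Cmp A h g" "is_zero_obj B (Fo K)"
  using assms A.hom_ar[OF f] A.hom_dom[OF f] A.hom_cod[OF f] unfolding objective_def by metis

lemma quasi_iso_ore:
  assumes s: "s \<in> hom A Z X" and Fs: "is_iso B (Fm s)" and s': "s' \<in> hom A Z' X"
  obtains W t t' where "t \<in> hom A W Z" "t' \<in> hom A W Z'" "Cmp A s t = Cmp A s' t'"
    "is_iso B (Fm t')"
proof -
  obtain v w where d: "(s, v, w) \<in> Dist A" using A.dist_complete A.hom_ar[OF s] by blast
  define P where "P = Cod A v"
  have v: "v \<in> hom A X P" using A.dist_hom(2)[OF d] A.hom_cod[OF s] unfolding P_def by simp
  have P: "is_zero_obj B (Fo P)" using F_iso_iff_cone_in_Ker[OF d s v] Fs by blast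
  have vs': "Cmp A v s' \<in> hom A Z' P" using A.comp_hom[OF s' v] .
  obtain W t' c where t': "t' \<in> hom A W Z'" and dt': "(t', Cmp A v s', c) \<in> Dist A"
    using A.dist_extend_left[OF vs'] .
  have "Cmp A v (Cmp A s' t') = Zer A W P"
    using A.comp_assoc[OF t' s' v] A.dist_comp_zero[OF dt' t' vs'] by simp
  then obtain t where "t \<in> hom A W Z" "Cmp A s' t' = Cmp A s t"
    using A.dist_weak_kernel[OF d s v A.comp_hom[OF t' s']] by blast
  moreover have "is_iso B (Fm t')" using F_iso_iff_cone_in_Ker[OF dt' t' vs'] P by blast
  ultimately show ?thesis using that t' by metis
qed

lemma objective_equalize:
  assumes O: "objective A B Fo Fm" and f: "f \<in> hom A W Y" and f': "f' \<in> hom A W Y"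
    and e: "Fm f = Fm f'"
  obtains V u where "u \<in> hom A V W" "is_iso B (Fm u)" "Cmp A f u = Cmp A f' u"
proof -
  define \<delta> where "\<delta> = Add A f (Neg A f')"
  have \<delta>: "\<delta> \<in> hom A W Y" unfolding \<delta>_def using A.add_hom[OF f A.neg_hom[OF f']] .
  have "Fm \<delta> = Zer B (Fo W) (Fo Y)"
    unfolding \<delta>_def using F.preserves_add[OF f A.neg_hom[OF f']] F.preserves_neg[OF f'] e
      B.add_neg_right[OF F.preserves_hom[OF f']] by simp
  then obtain K g h where g: "g \<in> hom A W K" and h: "h \<in> hom A K Y" and \<delta>gh: "\<delta> = Cmp A h g"
    and K: "is_zero_obj B (Fo K)"
    using objectiveE[OF O \<delta>] by blast
  obtain V u c where u: "u \<in> hom A V W" and du: "(u, g, c) \<in> Dist A"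
    using A.dist_extend_left[OF g] .
  have V: "V \<in> Ob A" using A.hom_ob u by blast
  have "Add A (Cmp A f u) (Neg A (Cmp A f' u)) = Cmp A \<delta> u"
    unfolding \<delta>_def using A.comp_add_left[OF u f A.neg_hom[OF f']] A.comp_neg_left[OF u f'] by simp
  also have "\<dots> = Zer A V Y"
    using \<delta>gh A.comp_assoc[OF u g h] A.dist_comp_zero[OF du u g] A.comp_zero_right[OF h V] by simp
  finally have "Cmp A f u = Cmp A f' u"
    by (rule A.eq_if_diff_zero[OF A.comp_hom[OF u f] A.comp_hom[OF u f']])
  moreover have "is_iso B (Fm u)" using F_iso_iff_cone_in_Ker[OF du u g] K by blast
  ultimately show ?thesis using that u by blast
qed

lemma WSM_imp_objective:
  assumes W: "WSM A B Fo Fm"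
  shows "objective A B Fo Fm"
  unfolding objective_def
proof (intro ballI impI)
  fix f assume fa: "f \<in> Ar A" and f0: "Fm f = Zer B (Fo (Dom A f)) (Fo (Cod A f))"
  define X Y where "X = Dom A f" and "Y = Cod A f"
  have f: "f \<in> hom A X Y" using A.arr_hom[OF fa] unfolding X_def Y_def .
  have X: "X \<in> Ob A" and Y: "Y \<in> Ob A" using A.hom_ob f by blast+
  obtain g h where d: "(f, g, h) \<in> Dist A" using A.dist_complete fa by blast
  define Z where "Z = Cod A g"
  have g: "g \<in> hom A Y Z" using A.dist_hom(2)[OF d] A.hom_cod[OF f] unfolding Z_def by simp
  have Ff: "Fm f \<in> hom B (Fo X) (Fo Y)" and Fg: "Fm g \<in> hom B (Fo Y) (Fo Z)"
    using F.preserves_hom f g by blast+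
  have "Cmp B (Idm B (Fo Y)) (Fm f) = Zer B (Fo X) (Fo Y)"
    using B.comp_id_left[OF Ff] f0 unfolding X_def Y_def by simp
  then obtain r where "r \<in> hom B (Fo Z) (Fo Y)" "Cmp B r (Fm g) = Idm B (Fo Y)"
    using B.dist_weak_cokernel[OF F_dist[OF d f] Ff Fg B.id_hom[OF F.preserves_ob[OF Y]]] by metis
  then have "is_split_mono B (Fm g)"
    unfolding is_split_mono_def using B.hom_ar[OF Fg] B.hom_dom[OF Fg] B.hom_cod[OF Fg] by auto
  then obtain X' g' where g': "g' \<in> hom A Z X'" and Fg'g: "is_iso B (Fm (Cmp A g' g))"
    using W A.hom_ar[OF g] A.hom_cod[OF g] unfolding WSM_def by blast
  have g'g: "Cmp A g' g \<in> hom A Y X'" using A.comp_hom[OF g g'] .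
  obtain K k c where k: "k \<in> hom A K Y" and dk: "(k, Cmp A g' g, c) \<in> Dist A"
    using A.dist_extend_left[OF g'g] .
  have "Cmp A (Cmp A g' g) f = Zer A X X'"
    using A.comp_assoc[OF f g g'] A.dist_comp_zero[OF d f g] A.comp_zero_right[OF g' X] by simp
  then obtain m where "m \<in> hom A X K" "f = Cmp A k m"
    using A.dist_weak_kernel[OF dk k g'g f] by blast
  moreover have "is_zero_obj B (Fo K)"
    using F_iso_second_iff_first_in_Ker[OF dk k g'g] Fg'g by blast
  ultimately show "\<exists>K\<in>Ob A. \<exists>g\<in>hom A (Dom A f) K. \<exists>h\<in>hom A K (Cod A f).
      f = Cmp A h g \<and> is_zero_obj B (Fo K)"
    using k A.hom_ob(1)[OF k] unfolding X_def Y_def by blast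
qed

lemma objective_imp_WSM:
  assumes O: "objective A B Fo Fm"
  shows "WSM A B Fo Fm"
  unfolding WSM_def
proof (intro ballI impI)
  fix u assume ua: "u \<in> Ar A" and sm: "is_split_mono B (Fm u)"
  define X Y where "X = Dom A u" and "Y = Cod A u"
  have u: "u \<in> hom A X Y" using A.arr_hom[OF ua] unfolding X_def Y_def .
  have X: "X \<in> Ob A" using A.hom_ob u by blast
  obtain v w where d: "(u, v, w) \<in> Dist A" using A.dist_complete ua by blast
  define Z where "Z = Cod A v"
  have v: "v \<in> hom A Y Z" using A.dist_hom(2)[OF d] A.hom_cod[OF u] unfolding Z_def by simp
  have w: "w \<in> hom A Z (Sh A X)" using A.dist_third_hom[OF d u v] .
  obtain K g h where g: "g \<in> hom A Z K" and h: "h \<in> hom A K (Sh A X)" and wgh: "w = Cmp A h g"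
    and K: "is_zero_obj B (Fo K)"
    using objectiveE[OF O w F_third_zero_if_F_split_mono[OF d u v sm]] .
  obtain p q where dh: "(h, p, q) \<in> Dist A" using A.dist_complete A.hom_ar[OF h] by blast
  define P where "P = Cod A p"
  have p: "p \<in> hom A (Sh A X) P" using A.dist_hom(2)[OF dh] A.hom_cod[OF h] unfolding P_def by simp
  have Fp: "is_iso B (Fm p)" using F_iso_second_iff_first_in_Ker[OF dh h p] K by blast
  obtain D \<phi> where D: "D \<in> Ob A" and \<phi>: "\<phi> \<in> hom A (Sh A D) P" "is_iso A \<phi>"
    using A.Sh_ess_surj A.hom_ob(2)[OF p] by metis
  define \<psi> where "\<psi> = inv_arr A \<phi>"
  have \<psi>: "\<psi> \<in> hom A P (Sh A D)" "is_iso A \<psi>"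
    using A.iso_inv_arr[OF \<phi>(2,1)] A.iso_inv_arr_iso[OF \<phi>(2,1)] unfolding \<psi>_def by auto
  obtain a where a: "a \<in> hom A X D" "ShM A a = Cmp A \<psi> p"
    using A.ShM_surj[OF A.comp_hom[OF p \<psi>(1)] X D] .
  have "Cmp A (ShM A a) w = Cmp A \<psi> (Cmp A (Cmp A p h) g)"
    using a(2) wgh A.comp_assoc[OF w p \<psi>(1)] A.comp_assoc[OF g h p] by simp
  also have "\<dots> = Zer A Z (Sh A D)"
    using A.dist_comp_zero[OF dh h p] A.comp_zero_left[OF g] A.comp_zero_right[OF \<psi>(1)]
      A.hom_ob(1)[OF g] A.hom_ob(2)[OF p] by simp
  finally obtain m where m: "m \<in> hom A Y D" "a = Cmp A m u"
    using A.dist_factor_through_first[OF d u v a(1)] by blast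
  have "is_iso B (Fm (ShM A a))"
    using a(2) F.preserves_comp[OF p \<psi>(1)]
      B.iso_comp[OF F.preserves_hom[OF p] F.preserves_hom[OF \<psi>(1)] Fp F.preserves_iso[OF \<psi>(1,2)]]
    by simp
  then have "is_iso B (Fm (Cmp A m u))" using F_iso_if_F_iso_ShM[OF a(1)] m(2) by simp
  then show "\<exists>X'\<in>Ob A. \<exists>u'\<in>hom A (Cod A u) X'. is_iso B (Fm (Cmp A u' u))"
    using D m(1) unfolding Y_def by blast
qed

lemma induced_faithful_imp_objective:
  assumes faithful: "induced_faithful A B Fo Fm"
  shows "objective A B Fo Fm"
  unfolding objective_def
proof (intro ballI impI)
  fix f assume fa: "f \<in> Ar A" and f0: "Fm f = Zer B (Fo (Dom A f)) (Fo (Cod A f))"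
  define X Y where "X = Dom A f" and "Y = Cod A f"
  have f: "f \<in> hom A X Y" using A.arr_hom[OF fa] unfolding X_def Y_def .
  have X: "X \<in> Ob A" and Y: "Y \<in> Ob A" using A.hom_ob f by blast+
  have 1: "Idm A X \<in> hom A X X" using A.id_hom[OF X] .
  have "quasi_iso A (in_Ker B Fo) (Idm A X)"
    using quasi_iso_iff[OF A.hom_ar[OF 1]] F.preserves_id[OF X] B.id_iso[OF F.preserves_ob[OF X]]
    by simp
  then have "is_roof A (in_Ker B Fo) X Y (Idm A X, f)"
    and "is_roof A (in_Ker B Fo) X Y (Idm A X, Zer A X Y)"
    unfolding is_roof_def using A.hom_cod[OF 1] A.hom_dom[OF 1] f A.zero_hom[OF X Y] by simp_all
  moreover have "induced_on_roof B Fm (Idm A X, f) = induced_on_roof B Fm (Idm A X, Zer A X Y)"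
    using f0 F.preserves_zero[OF X Y] unfolding X_def Y_def induced_on_roof_def by simp
  ultimately have "roof_equiv A (in_Ker B Fo) (Idm A X, f) (Idm A X, Zer A X Y)"
    using faithful X Y unfolding induced_faithful_def by blast
  then obtain W t t' where t: "t \<in> hom A W X" and t': "t' \<in> hom A W X"
    and qt: "quasi_iso A (in_Ker B Fo) (Cmp A (Idm A X) t)"
    and ft: "Cmp A f t = Cmp A (Zer A X Y) t'"
    unfolding roof_equiv_def prod.case A.hom_dom[OF 1] by blast
  obtain v w where d: "(t, v, w) \<in> Dist A" and K: "in_Ker B Fo (Cod A v)"
    using qt A.comp_id_left[OF t] unfolding quasi_iso_def by auto
  have v: "v \<in> hom A X (Cod A v)" using A.dist_hom(2)[OF d] A.hom_cod[OF t] by simp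
  obtain y where "y \<in> hom A (Cod A v) Y" "f = Cmp A y v"
    using A.dist_weak_cokernel[OF d t v f] ft A.comp_zero_left[OF t' Y] by metis
  then show "\<exists>K\<in>Ob A. \<exists>g\<in>hom A (Dom A f) K. \<exists>h\<in>hom A K (Cod A f).
      f = Cmp A h g \<and> is_zero_obj B (Fo K)"
    using v K A.hom_ob(2)[OF v] unfolding in_Ker_def X_def Y_def by blast
qed

lemma objective_imp_induced_faithful:
  assumes O: "objective A B Fo Fm"
  shows "induced_faithful A B Fo Fm"
  unfolding induced_faithful_def
proof (intro ballI allI impI, elim conjE)
  fix X Y r r'
  assume roof: "is_roof A (in_Ker B Fo) X Y r" and roof': "is_roof A (in_Ker B Fo) X Y r'"
    and eq: "induced_on_roof B Fm r = induced_on_roof B Fm r'"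
  obtain s f s' f' where r: "r = (s, f)" and r': "r' = (s', f')" by (cases r, cases r')
  define Z Z' where "Z = Dom A s" and "Z' = Dom A s'"
  have qs: "quasi_iso A (in_Ker B Fo) s" and s: "s \<in> hom A Z X" and f: "f \<in> hom A Z Y"
    using roof unfolding r is_roof_def quasi_iso_def Z_def hom_def by auto
  have qs': "quasi_iso A (in_Ker B Fo) s'" and s': "s' \<in> hom A Z' X" and f': "f' \<in> hom A Z' Y"
    using roof' unfolding r' is_roof_def quasi_iso_def Z'_def hom_def by auto
  have Fs: "is_iso B (Fm s)" and Fs': "is_iso B (Fm s')"
    using quasi_iso_iff A.hom_ar s s' qs qs' by blast+
  obtain W t t' where t: "t \<in> hom A W Z" and t': "t' \<in> hom A W Z'"
    and st: "Cmp A s t = Cmp A s' t'" and Ft': "is_iso B (Fm t')"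
    using quasi_iso_ore[OF s Fs s'] .
  have "Fm (Cmp A f t) = Cmp B (Cmp B (Fm f) (inv_arr B (Fm s))) (Cmp B (Fm s) (Fm t))"
    using F.preserves_comp[OF t f] B.comp_inv_arr_cancel[OF F.preserves_hom[OF f]
        F.preserves_hom[OF s] Fs F.preserves_hom[OF t]] by simp
  also have "\<dots> = Cmp B (Cmp B (Fm f') (inv_arr B (Fm s'))) (Cmp B (Fm s') (Fm t'))"
    using eq st F.preserves_comp[OF t s] F.preserves_comp[OF t' s']
    unfolding r r' induced_on_roof_def by simp
  also have "\<dots> = Fm (Cmp A f' t')"
    using F.preserves_comp[OF t' f'] B.comp_inv_arr_cancel[OF F.preserves_hom[OF f']
        F.preserves_hom[OF s'] Fs' F.preserves_hom[OF t']] by simp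
  finally obtain V u where u: "u \<in> hom A V W" and Fu: "is_iso B (Fm u)"
    and ftu: "Cmp A (Cmp A f t) u = Cmp A (Cmp A f' t') u"
    using objective_equalize[OF O A.comp_hom[OF t f] A.comp_hom[OF t' f']] by blast
  have stu: "Cmp A s (Cmp A t u) = Cmp A s' (Cmp A t' u)"
    using A.comp_assoc[OF u t s] A.comp_assoc[OF u t' s'] st by simp
  have t'u: "Cmp A t' u \<in> hom A V Z'" using A.comp_hom[OF u t'] .
  have "is_iso B (Fm (Cmp A t' u))"
    using F.preserves_comp[OF u t']
      B.iso_comp[OF F.preserves_hom[OF u] F.preserves_hom[OF t'] Fu Ft']
    by simp
  then have "is_iso B (Fm (Cmp A s' (Cmp A t' u)))"
    using F.preserves_comp[OF t'u s']
      B.iso_comp[OF F.preserves_hom[OF t'u] F.preserves_hom[OF s'] _ Fs']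
    by simp
  then have "quasi_iso A (in_Ker B Fo) (Cmp A s (Cmp A t u))"
    using stu quasi_iso_iff A.hom_ar[OF A.comp_hom[OF t'u s']] by simp
  moreover have "Cmp A f (Cmp A t u) = Cmp A f' (Cmp A t' u)"
    using ftu A.comp_assoc[OF u t f] A.comp_assoc[OF u t' f'] by simp
  ultimately show "roof_equiv A (in_Ker B Fo) r r'"
    unfolding r r' roof_equiv_def prod.case
    using A.hom_ob(1)[OF u] A.comp_hom[OF u t] t'u stu unfolding Z_def Z'_def by blast
qed

end

theorem theorem1p1:
  fixes A :: "('o,'m) tricat" and B :: "('p,'n) tricat"
    and Fo :: "'o \<Rightarrow> 'p" and Fm :: "'m \<Rightarrow> 'n" and \<xi> :: "'o \<Rightarrow> 'n"
  assumes "is_triangulated A" and "is_triangulated B"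
    and "is_triangle_functor A B Fo Fm \<xi>"
  shows "(WSM A B Fo Fm \<longleftrightarrow> objective A B Fo Fm) \<and>
         (objective A B Fo Fm \<longleftrightarrow> induced_faithful A B Fo Fm)"
proof -
  have "is_additive A" and "is_additive B"
    using assms(1,2) unfolding is_triangulated_def by blast+
  then interpret triangle_functor A B Fo Fm \<xi>
    by unfold_locales (simp_all add: assms)
  show ?thesis
    using WSM_imp_objective objective_imp_WSM
      induced_faithful_imp_objective objective_imp_induced_faithful by blast
qed

end
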